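(* Let $p$ be the POP of length 4 defined by the relations $1>2$ and $1>4$ (label $3$ isolated), and let $a(n)=|S_n(p)|$. Then $$\sum_{n\geq 0}a(n)x^n=\frac{(1-x)^2}{1-3x+2x^2-2x^3}.$$
   Context: An $n$-permutation is a word $\pi=\pi_1\cdots\pi_n$ containing each of $1,\ldots,n$ exactly once; $S_n$ is the set of $n$-permutations ($S_0$ consists of the empty permutation). A partially ordered pattern (POP) $p$ of length $k$ is a partial order on the label set $\{1,\ldots,k\}$; it is described by a set of generating relations, where a relation $x>y$ means that in an occurrence the entry in the $x$-th chosen position must be larger than the entry in the $y$-th chosen position, and labels not involved in any relation are unconstrained. An $n$-permutation $\pi$ contains $p$ if there are indices $1\leq i_1<\cdots<i_k\leq n$ such that $\pi_{i_x}>\pi_{i_y}$ whenever $x>y$ in the partial order; otherwise $\pi$ avoids $p$. $S_n(p)$ denotes the set of $n$-permutations avoiding $p$. *)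

theory Defs
  imports Main "HOL-Computational_Algebra.Formal_Power_Series"
begin

text \<open>n-permutations as words pi_1 ... pi_n (list index j holds pi_(j+1)).\<close>
definition perms :: "nat \<Rightarrow> nat list set" where
  "perms n = {xs. distinct xs \<and> set xs = {1..n}}"

text \<open>A POP of length k is given by a set R of generating relations (x,y) meaning x > y,
  with labels in 1..k. w contains the POP if there are positions
  1 <= i_1 < ... < i_k <= n with pi_(i_x) > pi_(i_y) for every relation (x,y).\<close>
definition contains_pop :: "nat \<Rightarrow> (nat \<times> nat) set \<Rightarrow> nat list \<Rightarrow> bool" where
  "contains_pop k R w \<longleftrightarrow>
     (\<exists>i :: nat \<Rightarrow> nat.
        (\<forall>x\<in>{1..k}. 1 \<le> i x \<and> i x \<le> length w) \<and>
        (\<forall>x y. 1 \<le> x \<and> x < y \<and> y \<le> k \<longrightarrow> i x < i y) \<and>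
        (\<forall>(x, y)\<in>R. w ! (i x - 1) > w ! (i y - 1)))"

definition avoiders :: "nat \<Rightarrow> (nat \<times> nat) set \<Rightarrow> nat \<Rightarrow> nat list set" where
  "avoiders k R n = {w \<in> perms n. \<not> contains_pop k R w}"

end

theory Submission
  imports Defs
begin

text \<open>
  An occurrence of the pattern is an entry with two smaller entries to its right that are not
  adjacent: the isolated label 3 only asks for a gap between them. So a permutation avoids the
  pattern iff, for every entry, the smaller entries to its right are at most two and, if two,
  adjacent. Splitting off the first letter \<open>c\<close> of an avoider of an \<open>n\<close>-set: if \<open>c\<close> is
  the smallest or second smallest letter, the rest is an arbitrary avoider; if \<open>c\<close> is the third
  smallest, the rest is an avoider in which the two smallest letters are adjacent; otherwise
  there is none. Counting that second class \<open>b(n)\<close> by the same decomposition gives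
  \<open>a(n+2) = 2 a(n+1) + b(n+1)\<close> and \<open>b(n+2) = 2 a(n) + b(n+1)\<close>, hence
  \<open>a(n+3) = 3 a(n+2) - 2 a(n+1) + 2 a(n)\<close>, which is the stated generating function.
\<close>

fun clustered_below :: "'a::linorder \<Rightarrow> 'a list \<Rightarrow> bool" where
  "clustered_below x [] = True"
| "clustered_below x (y # ys) =
     (if y < x then (\<forall>z\<in>set (tl ys). x \<le> z) else clustered_below x ys)"

fun clustered :: "'a::linorder list \<Rightarrow> bool" where
  "clustered [] = True"
| "clustered (x # xs) \<longleftrightarrow> clustered_below x xs \<and> clustered xs"

lemma ball_set_tl_conv_nth:
  "(\<forall>z\<in>set (tl ys). P z) \<longleftrightarrow> (\<forall>k. 0 < k \<longrightarrow> k < length ys \<longrightarrow> P (ys ! k))"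
  by (cases ys) (auto simp: all_set_conv_all_nth gr0_conv_Suc)

lemma ex_separated_pair_Cons_iff:
  "(\<exists>j k. j + 1 < k \<and> k < length (y # ys) \<and> (y # ys) ! j < x \<and> (y # ys) ! k < x) \<longleftrightarrow>
     (y < x \<and> (\<exists>k. 0 < k \<and> k < length ys \<and> ys ! k < x)) \<or>
     (\<exists>j k. j + 1 < k \<and> k < length ys \<and> ys ! j < x \<and> ys ! k < x)"
  (is "?pair \<longleftrightarrow> ?head \<or> ?tail")
proof
  assume ?pair
  then obtain j k where jk: "j + 1 < k" "k < length (y # ys)" "(y # ys) ! j < x" "(y # ys) ! k < x"
    by blast
  then obtain k' where k: "k = Suc k'"
    by (cases k) auto
  show "?head \<or> ?tail"
  proof (cases j)
    case 0
    then show ?thesis using jk k by auto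
  next
    case (Suc j')
    then show ?thesis using jk k by auto
  qed
next
  assume "?head \<or> ?tail"
  then show ?pair
  proof
    assume ?head
    then obtain k where "0 < k" "k < length ys" "y < x" "ys ! k < x"
      by blast
    then have "0 + 1 < Suc k \<and> Suc k < length (y # ys) \<and> (y # ys) ! 0 < x \<and> (y # ys) ! Suc k < x"
      by simp
    then show ?pair by blast
  next
    assume ?tail
    then obtain j k where "j + 1 < k" "k < length ys" "ys ! j < x" "ys ! k < x"
      by blast
    then have "Suc j + 1 < Suc k \<and> Suc k < length (y # ys) \<and>
        (y # ys) ! Suc j < x \<and> (y # ys) ! Suc k < x"
      by simp
    then show ?pair by blast
  qed
qed

lemma not_clustered_below_iff:
  "\<not> clustered_below x ys \<longleftrightarrow>
     (\<exists>j k. j + 1 < k \<and> k < length ys \<and> ys ! j < x \<and> ys ! k < x)"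
proof (induction ys)
  case (Cons y ys)
  show ?case
  proof (cases "y < x")
    case True
    have "\<exists>k. 0 < k \<and> k < length ys \<and> ys ! k < x"
      if "j + 1 < k" "k < length ys" "ys ! k < x" for j k
    proof
      show "0 < k \<and> k < length ys \<and> ys ! k < x"
        using that by simp
    qed
    moreover have "\<not> clustered_below x (y # ys) \<longleftrightarrow> (\<exists>k. 0 < k \<and> k < length ys \<and> ys ! k < x)"
      using True by (simp add: ball_set_tl_conv_nth not_le)
    ultimately show ?thesis
      unfolding ex_separated_pair_Cons_iff using True by blast
  next
    case False
    then show ?thesis
      unfolding ex_separated_pair_Cons_iff using Cons.IH by simp
  qed
qed simp

lemma clustered_iff_nth:
  "clustered w \<longleftrightarrow> (\<forall>a < length w. clustered_below (w ! a) (drop (Suc a) w))"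
  by (induction w) (simp_all add: All_less_Suc2)

lemma not_clustered_iff_nth:
  "\<not> clustered w \<longleftrightarrow> (\<exists>a j k. j + 1 < k \<and> Suc a + k < length w \<and>
     w ! (Suc a + j) < w ! a \<and> w ! (Suc a + k) < w ! a)"
proof -
  have "\<not> clustered w \<longleftrightarrow> (\<exists>a < length w. \<not> clustered_below (w ! a) (drop (Suc a) w))"
    by (simp add: clustered_iff_nth)
  also have "\<dots> \<longleftrightarrow> (\<exists>a j k. j + 1 < k \<and> Suc a + k < length w \<and>
     w ! (Suc a + j) < w ! a \<and> w ! (Suc a + k) < w ! a)"
    (is "?nth \<longleftrightarrow> ?shifted")
  proof
    assume ?nth
    then obtain a j k where "a < length w" "j + 1 < k" "k < length (drop (Suc a) w)"
      "drop (Suc a) w ! j < w ! a" "drop (Suc a) w ! k < w ! a"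
      unfolding not_clustered_below_iff by blast
    then have "j + 1 < k \<and> Suc a + k < length w \<and>
        w ! (Suc a + j) < w ! a \<and> w ! (Suc a + k) < w ! a"
      by simp
    then show ?shifted
      by blast
  next
    assume ?shifted
    then obtain a j k where "j + 1 < k" "Suc a + k < length w"
      "w ! (Suc a + j) < w ! a" "w ! (Suc a + k) < w ! a"
      by blast
    then have "a < length w \<and> j + 1 < k \<and> k < length (drop (Suc a) w) \<and>
        drop (Suc a) w ! j < w ! a \<and> drop (Suc a) w ! k < w ! a"
      by simp
    then show ?nth
      unfolding not_clustered_below_iff by blast
  qed
  finally show ?thesis .
qed

lemma contains_pop_iff_not_clustered:
  "contains_pop 4 {(1, 2), (1, 4)} w \<longleftrightarrow> \<not> clustered w"
proof
  assume "contains_pop 4 {(1, 2), (1, 4)} w"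
  then obtain i :: "nat \<Rightarrow> nat" where
    range: "\<forall>x\<in>{1..4}. 1 \<le> i x \<and> i x \<le> length w"
    and mono: "\<forall>x y. 1 \<le> x \<and> x < y \<and> y \<le> 4 \<longrightarrow> i x < i y"
    and rel: "\<forall>(x, y)\<in>{(1::nat, 2::nat), (1, 4)}. w ! (i x - 1) > w ! (i y - 1)"
    unfolding contains_pop_def by blast
  have order: "i 1 < i 2" "i 2 < i 3" "i 3 < i 4" "1 \<le> i 1" "i 4 \<le> length w"
    using mono range by auto
  define a j k where "a = i 1 - 1" and "j = i 2 - i 1 - 1" and "k = i 4 - i 1 - 1"
  have idx: "j + 1 < k" "Suc a + k < length w" "Suc a + j = i 2 - 1" "Suc a + k = i 4 - 1"
    unfolding a_def j_def k_def using order by arith+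
  have "w ! (i 2 - 1) < w ! (i 1 - 1)" "w ! (i 4 - 1) < w ! (i 1 - 1)"
    using rel by auto
  then have "j + 1 < k \<and> Suc a + k < length w \<and> w ! (Suc a + j) < w ! a \<and> w ! (Suc a + k) < w ! a"
    using idx by (simp add: a_def)
  then show "\<not> clustered w"
    unfolding not_clustered_iff_nth by blast
next
  assume "\<not> clustered w"
  then obtain a j k where occ: "j + 1 < k" "Suc a + k < length w"
    "w ! (Suc a + j) < w ! a" "w ! (Suc a + k) < w ! a"
    unfolding not_clustered_iff_nth by blast
  define i where "i t = (if t = 1 then a + 1 else if t = 2 then a + j + 2
    else if t = 3 then a + j + 3 else a + k + 2)" for t :: nat
  have "\<forall>x\<in>{1..4}. 1 \<le> i x \<and> i x \<le> length w"
    using occ by (auto simp: i_def)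
  moreover have "i x < i y" if "1 \<le> x" "x < y" "y \<le> 4" for x y
  proof -
    have "x = 1 \<and> y \<in> {2, 3, 4} \<or> x = 2 \<and> y \<in> {3, 4} \<or> x = 3 \<and> y = 4"
      using that by auto
    then show ?thesis using occ by (auto simp: i_def)
  qed
  moreover have "\<forall>(x, y)\<in>{(1::nat, 2::nat), (1, 4)}. w ! (i x - 1) > w ! (i y - 1)"
    using occ by (auto simp: i_def)
  ultimately show "contains_pop 4 {(1, 2), (1, 4)} w"
    unfolding contains_pop_def by blast
qed

lemma clustered_below_if_card_le1:
  assumes "distinct ys" "card {z \<in> set ys. z < x} \<le> 1"
  shows "clustered_below x ys"
  using assms
proof (induction ys)
  case (Cons y ys)
  show ?case
  proof (cases "y < x")
    case True
    have "{z \<in> set (y # ys). z < x} = insert y {z \<in> set ys. z < x}"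
      using True by auto
    then have "card (insert y {z \<in> set ys. z < x}) \<le> 1"
      using Cons.prems by simp
    then have "{z \<in> set ys. z < x} = {}"
      using Cons.prems(1) by (simp add: card_insert_if)
    then show ?thesis
      using True by (cases ys) (auto simp: not_less)
  next
    case False
    then have "{z \<in> set (y # ys). z < x} = {z \<in> set ys. z < x}"
      by auto
    then show ?thesis using False Cons by simp
  qed
qed simp

lemma not_clustered_below_if_card_ge3:
  assumes "3 \<le> card {z \<in> set ys. z < x}"
  shows "\<not> clustered_below x ys"
  using assms
proof (induction ys)
  case (Cons y ys)
  show ?case
  proof (cases "y < x")
    case True
    show ?thesis
    proof
      assume "clustered_below x (y # ys)"
      then have "{z \<in> set (y # ys). z < x} \<subseteq> {y, hd ys}"
        using True by (cases ys) (auto simp: not_less)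
      then have "card {z \<in> set (y # ys). z < x} \<le> card {y, hd ys}"
        by (rule card_mono[rotated]) simp
      also have "\<dots> \<le> 2"
        by (simp add: card_insert_if)
      finally show False
        using Cons.prems by simp
    qed
  next
    case False
    then have "{z \<in> set (y # ys). z < x} = {z \<in> set ys. z < x}"
      by auto
    then show ?thesis using False Cons by simp
  qed
qed simp

lemma clustered_below_cong:
  assumes "\<forall>z\<in>set ys. z < x \<longleftrightarrow> z < x'"
  shows "clustered_below x ys \<longleftrightarrow> clustered_below x' ys"
  using assms
proof (induction ys)
  case (Cons y ys)
  have "x \<le> z \<longleftrightarrow> x' \<le> z" if "z \<in> set (y # ys)" for z
    using Cons.prems that by (meson not_less)
  then have "(\<forall>z\<in>set (tl ys). x \<le> z) \<longleftrightarrow> (\<forall>z\<in>set (tl ys). x' \<le> z)"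
    by (cases ys) simp_all
  then show ?case
    using Cons by simp
qed simp

lemma clustered_below_Cons_less_iff:
  assumes "y < x" "distinct ys" "{z \<in> set ys. z < x} = {y'}"
  shows "clustered_below x (y # ys) \<longleftrightarrow> ys \<noteq> [] \<and> hd ys = y'"
proof (cases ys)
  case Nil
  then show ?thesis using assms(3) by simp
next
  case (Cons u us)
  have "(\<forall>z\<in>set us. x \<le> z) \<longleftrightarrow> u = y'"
  proof
    assume "\<forall>z\<in>set us. x \<le> z"
    moreover have "y' \<in> set (u # us)" "y' < x"
      using assms(3) Cons by auto
    ultimately show "u = y'" by auto
  next
    assume "u = y'"
    show "\<forall>z\<in>set us. x \<le> z"
    proof (intro ballI leI notI)
      fix z assume "z \<in> set us" "z < x"
      then have "z = u"
        using assms(3) Cons \<open>u = y'\<close> by auto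
      then show False
        using \<open>z \<in> set us\<close> assms(2) Cons by simp
    qed
  qed
  then show ?thesis
    using assms(1) Cons by simp
qed

definition clustered_perms :: "'a::linorder set \<Rightarrow> 'a list set" where
  "clustered_perms S = {w. distinct w \<and> set w = S \<and> clustered w}"

lemma avoiders_eq_clustered_perms:
  "avoiders 4 {(1, 2), (1, 4)} n = clustered_perms {1..n}"
  unfolding avoiders_def perms_def clustered_perms_def contains_pop_iff_not_clustered
  by auto

lemma clustered_perms_empty [simp]: "clustered_perms {} = {[]}"
  by (auto simp: clustered_perms_def)

lemma finite_clustered_perms:
  assumes "finite S"
  shows "finite (clustered_perms S)"
proof (rule finite_subset)
  show "clustered_perms S \<subseteq> {w. set w \<subseteq> S \<and> length w = card S}"
    unfolding clustered_perms_def using distinct_card by fastforce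
  show "finite {w. set w \<subseteq> S \<and> length w = card S}"
    using assms by (rule finite_lists_length_eq)
qed

lemma clustered_perms_filter_eq_UN:
  assumes "S \<noteq> {}"
  shows "{w \<in> clustered_perms S. P w} =
    (\<Union>c\<in>S. Cons c ` {zs \<in> clustered_perms (S - {c}). clustered_below c zs \<and> P (c # zs)})"
    (is "?lhs = (\<Union>c\<in>S. Cons c ` ?tails c)")
proof (intro equalityI subsetI)
  fix w assume w: "w \<in> ?lhs"
  then obtain c zs where c: "w = c # zs"
    using assms by (cases w) (auto simp: clustered_perms_def)
  then have "c \<in> S" "zs \<in> ?tails c"
    using w by (auto simp: clustered_perms_def)
  then show "w \<in> (\<Union>c\<in>S. Cons c ` ?tails c)"
    using c by blast
next
  fix w assume "w \<in> (\<Union>c\<in>S. Cons c ` ?tails c)"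
  then obtain c zs where "c \<in> S" "zs \<in> ?tails c" "w = c # zs"
    by blast
  then show "w \<in> ?lhs"
    by (auto simp: clustered_perms_def)
qed

lemma card_clustered_perms_filter:
  assumes "finite S" "S \<noteq> {}"
  shows "card {w \<in> clustered_perms S. P w} =
    (\<Sum>c\<in>S. card {zs \<in> clustered_perms (S - {c}). clustered_below c zs \<and> P (c # zs)})"
proof -
  have "card {w \<in> clustered_perms S. P w} =
      (\<Sum>c\<in>S. card (Cons c ` {zs \<in> clustered_perms (S - {c}). clustered_below c zs \<and> P (c # zs)}))"
    unfolding clustered_perms_filter_eq_UN[OF assms(2)]
    using assms(1) by (intro card_UN_disjoint) (auto simp: finite_clustered_perms)
  then show ?thesis
    by (simp add: card_image)
qed

lemma clustered_perms_hd_min: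
  assumes "c \<in> S" "\<forall>z\<in>S. c \<le> z"
  shows "{zs \<in> clustered_perms S. zs \<noteq> [] \<and> hd zs = c} = Cons c ` clustered_perms (S - {c})"
proof (intro equalityI subsetI)
  fix zs assume "zs \<in> {zs \<in> clustered_perms S. zs \<noteq> [] \<and> hd zs = c}"
  then show "zs \<in> Cons c ` clustered_perms (S - {c})"
    by (cases zs) (auto simp: clustered_perms_def)
next
  fix zs assume "zs \<in> Cons c ` clustered_perms (S - {c})"
  then obtain ws where ws: "zs = c # ws" "ws \<in> clustered_perms (S - {c})"
    by blast
  have no_smaller: "{z \<in> set ws. z < c} = {}"
    using ws assms(2) by (auto simp: clustered_perms_def)
  have "distinct ws"
    using ws by (simp add: clustered_perms_def)
  moreover have "card {z \<in> set ws. z < c} \<le> 1"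
    unfolding no_smaller by simp
  ultimately have "clustered_below c ws"
    by (rule clustered_below_if_card_le1)
  then show "zs \<in> {zs \<in> clustered_perms S. zs \<noteq> [] \<and> hd zs = c}"
    using ws assms(1) by (auto simp: clustered_perms_def)
qed

lemma clustered_perms_filter_if_card_below_le1:
  assumes "card {z \<in> T. z < c} \<le> 1"
  shows "{zs \<in> clustered_perms T. clustered_below c zs \<and> P zs} = {zs \<in> clustered_perms T. P zs}"
proof -
  have "clustered_below c zs" if "zs \<in> clustered_perms T" for zs
    using that assms by (intro clustered_below_if_card_le1) (auto simp: clustered_perms_def)
  then show ?thesis
    by blast
qed

lemma card_clustered_perms_filter_if_card_below_ge3:
  assumes "3 \<le> card {z \<in> T. z < c}"
  shows "card {zs \<in> clustered_perms T. clustered_below c zs \<and> P zs} = 0"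
proof -
  have "\<not> clustered_below c zs" if "zs \<in> clustered_perms T" for zs
    using that assms by (intro not_clustered_below_if_card_ge3) (auto simp: clustered_perms_def)
  then have "{zs \<in> clustered_perms T. clustered_below c zs \<and> P zs} = {}"
    by blast
  then show ?thesis
    by (simp only: card.empty)
qed

lemma clustered_perms_filter_Cons_ge:
  assumes "x \<le> y" "\<forall>z\<in>T. z < x \<longleftrightarrow> z < y"
  shows "{zs \<in> clustered_perms T. clustered_below y zs \<and> clustered_below x (y # zs)} =
    {zs \<in> clustered_perms T. clustered_below y zs}"
proof -
  have "clustered_below x (y # zs) \<longleftrightarrow> clustered_below y zs" if "zs \<in> clustered_perms T" for zs
  proof -
    have "\<forall>z\<in>set zs. z < x \<longleftrightarrow> z < y"
      using that assms(2) by (auto simp: clustered_perms_def)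
    then show ?thesis
      using leD[OF assms(1)] clustered_below_cong[of zs x y] by simp
  qed
  then show ?thesis
    by blast
qed

lemma bij_betw_rank:
  fixes S :: "'a::linorder set"
  assumes "finite S"
  shows "bij_betw (\<lambda>x. card {y \<in> S. y < x}) S {..<card S}"
proof -
  let ?rank = "\<lambda>x. card {y \<in> S. y < x}"
  have "strict_mono_on S ?rank"
    using assms by (intro strict_mono_onI psubset_card_mono) auto
  then have inj: "inj_on ?rank S"
    by (rule strict_mono_on_imp_inj_on)
  have "?rank ` S \<subseteq> {..<card S}"
    using assms by (auto intro!: psubset_card_mono)
  moreover have "card (?rank ` S) = card S"
    using inj by (rule card_image)
  ultimately have "?rank ` S = {..<card S}"
    by (intro card_subset_eq) auto
  then show ?thesis
    using inj by (simp add: bij_betw_def)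
qed

lemma sum_over_rank:
  fixes S :: "'a::linorder set"
  assumes "finite S"
  shows "(\<Sum>x\<in>S. g (card {y \<in> S. y < x})) = (\<Sum>r<card S. g r)"
  using sum.reindex_bij_betw[OF bij_betw_rank[OF assms]] .

lemma less_if_card_below_less:
  fixes S :: "'a::linorder set"
  assumes "finite S" "card {z \<in> S. z < y} < card {z \<in> S. z < x}"
  shows "y < x"
proof (rule ccontr)
  assume "\<not> y < x"
  then have "{z \<in> S. z < x} \<subseteq> {z \<in> S. z < y}"
    by (auto simp: not_less intro: less_le_trans)
  then have "card {z \<in> S. z < x} \<le> card {z \<in> S. z < y}"
    using assms(1) by (intro card_mono) auto
  then show False
    using assms(2) by simp
qed

lemma below_eq_if_card_below_eq:
  fixes S :: "'a::linorder set"
  assumes "finite S" "y \<in> S" "card {z \<in> S. z < y} = card {z \<in> S. z < x}"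
  shows "x \<le> y" and "{z \<in> S. z < y} = {z \<in> S. z < x}"
proof -
  show "x \<le> y"
  proof (rule ccontr)
    assume "\<not> x \<le> y"
    then have "{z \<in> S. z < y} \<subseteq> {z \<in> S. z < x}"
      by (auto simp: not_le intro: less_trans)
    moreover have "y \<in> {z \<in> S. z < x}" "y \<notin> {z \<in> S. z < y}"
      using assms(2) \<open>\<not> x \<le> y\<close> by (simp_all add: not_le)
    ultimately have "{z \<in> S. z < y} \<subset> {z \<in> S. z < x}"
      by blast
    then have "card {z \<in> S. z < y} < card {z \<in> S. z < x}"
      using assms(1) by (intro psubset_card_mono) auto
    then show False
      using assms(3) by simp
  qed
  then have "{z \<in> S. z < x} \<subseteq> {z \<in> S. z < y}"
    by (auto intro: less_le_trans)
  then show "{z \<in> S. z < y} = {z \<in> S. z < x}"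
    using assms(1,3) by (intro card_subset_eq[symmetric]) auto
qed

lemma below_doubletonE:
  fixes S :: "'a::linorder set"
  assumes "finite S" "y \<in> S" "card {z \<in> S. z < y} \<le> 1" "card {z \<in> S. z < x} = 2"
  obtains y' where "y < x" "{z \<in> S. z < x} = {y, y'}" "y \<noteq> y'"
proof -
  have "y < x"
    using assms(3,4) by (intro less_if_card_below_less[OF assms(1)]) simp
  then have "y \<in> {z \<in> S. z < x}"
    using assms(2) by simp
  then have "card ({z \<in> S. z < x} - {y}) = 1"
    using assms(1,4) by simp
  then obtain y' where "{z \<in> S. z < x} - {y} = {y'}"
    by (rule card_1_singletonE)
  then have "{z \<in> S. z < x} = {y, y'}" "y \<noteq> y'"
    using \<open>y \<in> {z \<in> S. z < x}\<close> by blast+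
  then show thesis
    using \<open>y < x\<close> that by blast
qed

lemma clustered_perms_filter_Cons_less:
  fixes S :: "'a::linorder set"
  assumes "y < x" "{z \<in> S. z < x} = {y, y'}" "y \<noteq> y'"
  shows "{zs \<in> clustered_perms (S - {y}). clustered_below y zs \<and> clustered_below x (y # zs)} =
    Cons y' ` clustered_perms (S - {y} - {y'})"
proof -
  have below_x: "z = y'" if "z \<in> S - {y}" "z < x" for z
  proof -
    have "z \<in> {z \<in> S. z < x}"
      using that by simp
    then show ?thesis
      unfolding assms(2) using that(1) by simp
  qed
  have "y' \<in> {z \<in> S. z < x}"
    unfolding assms(2) by simp
  then have y': "y' \<in> S - {y}" "y' < x"
    using assms(3) by auto
  have y'_min: "\<forall>z\<in>S - {y}. y' \<le> z"
  proof (intro ballI leI notI)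
    fix z assume z: "z \<in> S - {y}" "z < y'"
    then have "z = y'"
      using below_x less_trans[OF z(2) y'(2)] by blast
    then show False
      using z(2) by simp
  qed
  have "clustered_below y zs \<and> clustered_below x (y # zs) \<longleftrightarrow> zs \<noteq> [] \<and> hd zs = y'"
    if "zs \<in> clustered_perms (S - {y})" for zs
  proof -
    have zs: "distinct zs" "set zs = S - {y}"
      using that by (auto simp: clustered_perms_def)
    have "{z \<in> set zs. z < y} \<subseteq> {y'}"
      using zs(2) below_x less_trans[OF _ assms(1)] by blast
    then have "card {z \<in> set zs. z < y} \<le> card {y'}"
      by (rule card_mono[rotated]) simp
    then have "clustered_below y zs"
      using zs(1) by (intro clustered_below_if_card_le1) simp_all
    moreover have "{z \<in> set zs. z < x} = {y'}"
      using zs(2) below_x y' by blast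
    ultimately show ?thesis
      using clustered_below_Cons_less_iff[OF assms(1) zs(1)] by simp
  qed
  then have "{zs \<in> clustered_perms (S - {y}). clustered_below y zs \<and> clustered_below x (y # zs)} =
      {zs \<in> clustered_perms (S - {y}). zs \<noteq> [] \<and> hd zs = y'}"
    by blast
  also have "\<dots> = Cons y' ` clustered_perms (S - {y} - {y'})"
    using y'(1) y'_min by (rule clustered_perms_hd_min)
  finally show ?thesis .
qed

lemma sum_lessThan_rank_profile:
  "(\<Sum>r<n. if r \<le> 1 then A else if r = 2 then B else 0) =
     min n 2 * A + (if 3 \<le> n then B else (0::nat))"
  by (induction n) (auto simp: min_def)

text \<open>These are \<open>a\<close> and \<open>b\<close> above: \<open>num_avoiders_adj n\<close> counts the avoiders of an \<open>n\<close>-set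
  whose two smallest letters are adjacent, i.e. that are \<open>clustered_below x\<close> for any \<open>x\<close> lying
  above exactly two of the letters.\<close>

fun num_avoiders :: "nat \<Rightarrow> nat" and num_avoiders_adj :: "nat \<Rightarrow> nat" where
  "num_avoiders 0 = 1"
| "num_avoiders (Suc 0) = 1"
| "num_avoiders (Suc (Suc n)) = 2 * num_avoiders (Suc n) + num_avoiders_adj (Suc n)"
| "num_avoiders_adj 0 = 0"
| "num_avoiders_adj (Suc 0) = 0"
| "num_avoiders_adj (Suc (Suc n)) = 2 * num_avoiders n + num_avoiders_adj (Suc n)"

lemma card_clustered_perms_Suc:
  fixes S :: "'a::linorder set"
  assumes "finite S" "card S = Suc m"
    and all_m: "\<And>T :: 'a set. finite T \<Longrightarrow> card T = m \<Longrightarrow>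
      card (clustered_perms T) = num_avoiders m"
    and adj_m: "\<And>(T :: 'a set) x. finite T \<Longrightarrow> card T = m \<Longrightarrow> card {z \<in> T. z < x} = 2 \<Longrightarrow>
      card {zs \<in> clustered_perms T. clustered_below x zs} = num_avoiders_adj m"
  shows "card (clustered_perms S) = num_avoiders (Suc m)"
proof -
  let ?g = "\<lambda>r. if r \<le> 1 then num_avoiders m else if r = 2 then num_avoiders_adj m else 0"
  have "S \<noteq> {}"
    using assms(2) by auto
  then have "card (clustered_perms S) =
      (\<Sum>c\<in>S. card {zs \<in> clustered_perms (S - {c}). clustered_below c zs})"
    using card_clustered_perms_filter[OF assms(1), of "\<lambda>_. True"] by simp
  also have "\<dots> = (\<Sum>c\<in>S. ?g (card {z \<in> S. z < c}))"
  proof (rule sum.cong[OF refl])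
    fix c assume "c \<in> S"
    let ?T = "S - {c}"
    have T: "finite ?T" "card ?T = m" "{z \<in> ?T. z < c} = {z \<in> S. z < c}"
      using assms(1,2) \<open>c \<in> S\<close> by auto
    consider "card {z \<in> S. z < c} \<le> 1" | "card {z \<in> S. z < c} = 2" | "3 \<le> card {z \<in> S. z < c}"
      by linarith
    then show "card {zs \<in> clustered_perms ?T. clustered_below c zs} = ?g (card {z \<in> S. z < c})"
    proof cases
      case 1
      then show ?thesis
        using clustered_perms_filter_if_card_below_le1[of ?T c "\<lambda>_. True"] all_m T by simp
    next
      case 2
      then show ?thesis
        using adj_m[of ?T c] T by simp
    next
      case 3
      then show ?thesis
        using card_clustered_perms_filter_if_card_below_ge3[of ?T c "\<lambda>_. True"] T by simp
    qed
  qed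
  also have "\<dots> = (\<Sum>r<Suc m. ?g r)"
    using sum_over_rank[OF assms(1), of ?g] unfolding assms(2) .
  also have "\<dots> = num_avoiders (Suc m)"
    unfolding sum_lessThan_rank_profile by (cases m rule: num_avoiders.cases) simp_all
  finally show ?thesis .
qed

lemma card_clustered_perms_adj_Suc:
  fixes S :: "'a::linorder set"
  assumes "finite S" "card S = Suc m" "card {z \<in> S. z < x} = 2"
    and all_pred: "\<And>T :: 'a set. finite T \<Longrightarrow> card T = m - 1 \<Longrightarrow>
      card (clustered_perms T) = num_avoiders (m - 1)"
    and adj_m: "\<And>(T :: 'a set) x. finite T \<Longrightarrow> card T = m \<Longrightarrow> card {z \<in> T. z < x} = 2 \<Longrightarrow>
      card {zs \<in> clustered_perms T. clustered_below x zs} = num_avoiders_adj m"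
  shows "card {ys \<in> clustered_perms S. clustered_below x ys} = num_avoiders_adj (Suc m)"
proof -
  let ?g = "\<lambda>r. if r \<le> 1 then num_avoiders (m - 1) else if r = 2 then num_avoiders_adj m else 0"
  let ?below = "\<lambda>c. {z \<in> S. z < c}"
  let ?tails = "\<lambda>y. {zs \<in> clustered_perms (S - {y}). clustered_below y zs \<and> clustered_below x (y # zs)}"
  have "S \<noteq> {}"
    using assms(2) by auto
  then have "card {ys \<in> clustered_perms S. clustered_below x ys} = (\<Sum>y\<in>S. card (?tails y))"
    by (rule card_clustered_perms_filter[OF assms(1)])
  also have "\<dots> = (\<Sum>y\<in>S. ?g (card (?below y)))"
  proof (rule sum.cong[OF refl])
    fix y assume "y \<in> S"
    let ?T = "S - {y}"
    have T: "finite ?T" "card ?T = m" "{z \<in> ?T. z < y} = ?below y"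
      using assms(1,2) \<open>y \<in> S\<close> by auto
    consider "card (?below y) \<le> 1" | "card (?below y) = 2" | "3 \<le> card (?below y)"
      by linarith
    then show "card (?tails y) = ?g (card (?below y))"
    proof cases
      case 1
      then obtain y' where y': "y < x" "?below x = {y, y'}" "y \<noteq> y'"
        using below_doubletonE[OF assms(1) \<open>y \<in> S\<close> _ assms(3)] by blast
      then have "y' \<in> ?T"
        by blast
      then show ?thesis
        using 1 all_pred T clustered_perms_filter_Cons_less[OF y'] by (simp add: card_image)
    next
      case 2
      then have "x \<le> y" "?below y = ?below x"
        using below_eq_if_card_below_eq[OF assms(1) \<open>y \<in> S\<close>] assms(3) by simp_all
      then have "\<forall>z\<in>?T. z < x \<longleftrightarrow> z < y"
        by blast
      then show ?thesis
        using clustered_perms_filter_Cons_ge[OF \<open>x \<le> y\<close>] adj_m[of ?T y] T 2 by simp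
    next
      case 3
      then show ?thesis
        using card_clustered_perms_filter_if_card_below_ge3[of ?T y "\<lambda>zs. clustered_below x (y # zs)"] T
        by simp
    qed
  qed
  also have "\<dots> = (\<Sum>r<Suc m. ?g r)"
    using sum_over_rank[OF assms(1), of ?g] unfolding assms(2) .
  also have "\<dots> = num_avoiders_adj (Suc m)"
  proof -
    have "2 \<le> card S"
      using assms(1,3) card_mono[of S "?below x"] by fastforce
    then show ?thesis
      unfolding sum_lessThan_rank_profile using assms(2)
      by (cases m rule: num_avoiders_adj.cases) simp_all
  qed
  finally show ?thesis .
qed

lemma card_clustered_perms_and_adj:
  fixes S :: "'a::linorder set"
  assumes "finite S" "card S = n"
  shows "card (clustered_perms S) = num_avoiders n \<and>
    (\<forall>x. card {z \<in> S. z < x} = 2 \<longrightarrow>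
       card {ys \<in> clustered_perms S. clustered_below x ys} = num_avoiders_adj n)"
  using assms
proof (induction n arbitrary: S rule: less_induct)
  case (less n)
  show ?case
  proof (cases n)
    case 0
    then show ?thesis
      using less.prems by simp
  next
    case (Suc m)
    have all_pred: "card (clustered_perms T) = num_avoiders (m - 1)"
      if "finite T" "card T = m - 1" for T :: "'a set"
      using less.IH[of "m - 1" T] that Suc by simp
    have all_m: "card (clustered_perms T) = num_avoiders m"
      and adj_m: "card {z \<in> T. z < x} = 2 \<Longrightarrow>
        card {zs \<in> clustered_perms T. clustered_below x zs} = num_avoiders_adj m"
      if "finite T" "card T = m" for T :: "'a set" and x
      using less.IH[of m T] that Suc by simp_all
    show ?thesis
      using card_clustered_perms_Suc[OF less.prems[unfolded Suc] all_m adj_m]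
        card_clustered_perms_adj_Suc[OF less.prems[unfolded Suc] _ all_pred adj_m] Suc
      by blast
  qed
qed

lemma num_avoiders_rec:
  "num_avoiders (Suc (Suc (Suc n))) + 2 * num_avoiders (Suc n) =
     3 * num_avoiders (Suc (Suc n)) + 2 * num_avoiders n"
  by simp

lemma fps_num_avoiders_mult_denominator:
  "Abs_fps (\<lambda>n. of_nat (num_avoiders n) :: 'a::comm_ring_1) *
     (1 - 3 * fps_X + 2 * fps_X ^ 2 - 2 * fps_X ^ 3) = (1 - fps_X) ^ 2"
  (is "?f * ?D = _")
proof (rule fps_ext)
  fix n
  let ?a = "\<lambda>k. of_nat (num_avoiders k) :: 'a"
  have expand: "?f * ?D = ?f - 3 * (fps_X * ?f) + 2 * (fps_X ^ 2 * ?f) - 2 * (fps_X ^ 3 * ?f)"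
    by (simp add: algebra_simps)
  have square: "(1 - fps_X) ^ 2 = 1 - 2 * fps_X + (fps_X ^ 2 :: 'a fps)"
    by (simp add: power2_eq_square algebra_simps)
  show "fps_nth (?f * ?D) n = fps_nth ((1 - fps_X) ^ 2) n"
  proof (cases "n < 3")
    case True
    have initial_values: "num_avoiders 1 = 1" "num_avoiders 2 = 2"
      by (simp_all add: numeral_2_eq_2)
    from True consider "n = 0" | "n = 1" | "n = 2"
      by linarith
    then show ?thesis
      unfolding expand square
      by cases (simp_all add: fps_numeral_fps_const fps_X_power_mult_nth initial_values)
  next
    case False
    then obtain m where m: "n = Suc (Suc (Suc m))"
      by (intro that[of "n - 3"]) simp
    have "fps_nth (?f * ?D) n = ?a (Suc (Suc (Suc m))) - 3 * ?a (Suc (Suc m)) + 2 * ?a (Suc m) - 2 * ?a m"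
      unfolding expand m
      by (simp add: fps_numeral_fps_const fps_X_power_mult_nth del: num_avoiders.simps)
    also have "\<dots> = (?a (Suc (Suc (Suc m))) + 2 * ?a (Suc m)) - (3 * ?a (Suc (Suc m)) + 2 * ?a m)"
      by (simp add: algebra_simps del: num_avoiders.simps)
    also have "\<dots> = 0"
      using arg_cong[OF num_avoiders_rec[of m], of "of_nat :: nat \<Rightarrow> 'a"]
      by (simp only: of_nat_add of_nat_mult of_nat_numeral diff_self)
    also have "\<dots> = fps_nth ((1 - fps_X) ^ 2) n"
      unfolding square m by (simp add: fps_numeral_fps_const)
    finally show ?thesis .
  qed
qed

lemma fps_num_avoiders:
  "Abs_fps (\<lambda>n. of_nat (num_avoiders n) :: 'a::field)
     = (1 - fps_X) ^ 2 / (1 - 3 * fps_X + 2 * fps_X ^ 2 - 2 * fps_X ^ 3)"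
proof -
  have "(1 - 3 * fps_X + 2 * fps_X ^ 2 - 2 * fps_X ^ 3 :: 'a fps) \<noteq> 0"
    by (intro fps_nonzeroI[of _ 0]) simp
  then show ?thesis
    by (simp flip: fps_num_avoiders_mult_denominator)
qed

theorem theorem3p8:
  shows "Abs_fps (\<lambda>n. of_nat (card (avoiders 4 {(1, 2), (1, 4)} n)) :: rat)
         = (1 - fps_X) ^ 2 / (1 - 3 * fps_X + 2 * fps_X ^ 2 - 2 * fps_X ^ 3)"
proof -
  have "card (avoiders 4 {(1, 2), (1, 4)} n) = num_avoiders n" for n
    unfolding avoiders_eq_clustered_perms using card_clustered_perms_and_adj[of "{1..n}" n] by simp
  then show ?thesis
    using fps_num_avoiders by simp
qed

end
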